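(* Let $n\ge1$, $N\ge1$, $p\in(0,1)$, and let $I:\{0,1\}^n\to\{0,1\}$ be a decoding-error indicator with error-correcting capability $t$ ($0\le t<n$, $I(\mathbf z)=0$ whenever $wt(\mathbf z)\le t$). For $q\in(0,1)$ let $\hat P_{IS}(e)=\frac1N\sum_{j=1}^N I(\mathbf z_j)W(wt(\mathbf z_j);p,q)$ with $\mathbf z_j$ i.i.d. with pmf $q^{wt(\mathbf z)}(1-q)^{n-wt(\mathbf z)}$. Then for all $q\in(0,1)$, $$\frac{\partial}{\partial q}\mathrm{var}_q\big[\hat P_{IS}(e)\big]=-\frac1N\sum_{i=t+1}^{n}\frac{i-nq}{q(1-q)}\,W(i;p,q)\,P_p(e;i).$$
   Context: Setting: linear block code of length $n$ over a binary symmetric channel with cross-over probability $p$; all-zero codeword transmitted so the channel output is the error pattern $\mathbf z\in\{0,1\}^n$. $wt(\mathbf z)$ is the number of ones. $I(\mathbf z)=1$ iff $\mathbf z$ is erroneously decoded. $W(i;p,q)=\frac{p^i(1-p)^{n-i}}{q^i(1-q)^{n-i}}$. $P_p(e;i)=\sum_{\mathbf z:\,wt(\mathbf z)=i}I(\mathbf z)p^i(1-p)^{n-i}$. $\mathrm{var}_q$ is the variance when samples have pmf $q^{wt(\mathbf z)}(1-q)^{n-wt(\mathbf z)}$. *)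

theory Defs
  imports "HOL-Probability.Probability"
begin

text \<open>Error patterns in {0,1}^n are represented as functions z :: nat => bool
  with z j = False for j >= n (the default of Pi_pmf).\<close>

definition wt :: "nat \<Rightarrow> (nat \<Rightarrow> bool) \<Rightarrow> nat" where
  "wt n z = card {j. j < n \<and> z j}"

text \<open>pmf of one error pattern: q^wt(z) (1-q)^(n-wt(z)) (i.i.d. Bernoulli(q) bits).\<close>
definition pattern_pmf :: "nat \<Rightarrow> real \<Rightarrow> (nat \<Rightarrow> bool) pmf" where
  "pattern_pmf n q = Pi_pmf {..<n} False (\<lambda>_. bernoulli_pmf q)"

definition samples_pmf :: "nat \<Rightarrow> nat \<Rightarrow> real \<Rightarrow> (nat \<Rightarrow> (nat \<Rightarrow> bool)) pmf" where
  "samples_pmf n N q = Pi_pmf {..<N} (\<lambda>_. False) (\<lambda>_. pattern_pmf n q)"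

definition W :: "nat \<Rightarrow> nat \<Rightarrow> real \<Rightarrow> real \<Rightarrow> real" where
  "W n i p q = (p ^ i * (1 - p) ^ (n - i)) / (q ^ i * (1 - q) ^ (n - i))"

definition P_err :: "nat \<Rightarrow> ((nat \<Rightarrow> bool) \<Rightarrow> bool) \<Rightarrow> real \<Rightarrow> nat \<Rightarrow> real" where
  "P_err n I p i = (\<Sum>z \<in> {z. (\<forall>j. n \<le> j \<longrightarrow> \<not> z j) \<and> wt n z = i}.
                      of_bool (I z) * p ^ i * (1 - p) ^ (n - i))"

definition P_IS :: "nat \<Rightarrow> nat \<Rightarrow> ((nat \<Rightarrow> bool) \<Rightarrow> bool) \<Rightarrow> real \<Rightarrow> real
                      \<Rightarrow> (nat \<Rightarrow> (nat \<Rightarrow> bool)) \<Rightarrow> real" where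
  "P_IS n N I p q zs = (1 / real N) * (\<Sum>j<N. of_bool (I (zs j)) * W n (wt n (zs j)) p q)"

definition var_IS :: "nat \<Rightarrow> nat \<Rightarrow> ((nat \<Rightarrow> bool) \<Rightarrow> bool) \<Rightarrow> real \<Rightarrow> real \<Rightarrow> real" where
  "var_IS n N I p q = measure_pmf.variance (samples_pmf n N q) (P_IS n N I p q)"

end

theory Submission
  imports Defs
begin

text \<open>Writing \<open>g = I \<cdot> W(wt; p, q)\<close> for the single-sample estimator, the samples are
  i.i.d., so \<open>var\<^sub>q[P\<^sub>I\<^sub>S] = var\<^sub>q[g] / N\<close>. Reweighting by the likelihood ratio \<open>W\<close> turns
  \<open>q\<close>-expectations into \<open>p\<close>-expectations: \<open>E\<^sub>q[g] = \<Sum>\<^sub>i P\<^sub>p(e; i)\<close> does not depend on \<open>q\<close>,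
  and \<open>E\<^sub>q[g\<^sup>2] = E\<^sub>p[I \<cdot> W(wt; p, q)] = \<Sum>\<^sub>i W(i; p, q) P\<^sub>p(e; i)\<close>. So only \<open>W(i; p, q)\<close>
  depends on \<open>q\<close>, with logarithmic derivative \<open>-(i - n q) / (q (1 - q))\<close>, and the terms
  with \<open>i \<le> t\<close> vanish because \<open>I = 0\<close> there.\<close>

lemma expectation_Pi_pmf_component:
  fixes g :: "'a \<Rightarrow> real"
  assumes "finite A" "j \<in> A"
  shows "measure_pmf.expectation (Pi_pmf A d (\<lambda>_. M)) (\<lambda>y. g (y j)) =
           measure_pmf.expectation M g"
proof -
  have "map_pmf (\<lambda>y. y j) (Pi_pmf A d (\<lambda>_. M)) = M"
    using assms by (simp add: Pi_pmf_component)
  then show ?thesis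
    by (metis integral_map_pmf)
qed

lemma integrable_Pi_pmf_component:
  fixes g :: "'a \<Rightarrow> real"
  assumes "finite A" "j \<in> A" "integrable (measure_pmf M) g"
  shows "integrable (Pi_pmf A d (\<lambda>_. M)) (\<lambda>y. g (y j))"
proof -
  have "map_pmf (\<lambda>y. y j) (Pi_pmf A d (\<lambda>_. M)) = M"
    using assms by (simp add: Pi_pmf_component)
  then show ?thesis
    by (metis assms(3) integrable_map_pmf_eq)
qed

lemma expectation_Pi_pmf_distinct_components:
  fixes g :: "'a \<Rightarrow> real"
  assumes "finite A" "j \<in> A" "k \<in> A" "j \<noteq> k" "integrable (measure_pmf M) g"
  shows "measure_pmf.expectation (Pi_pmf A d (\<lambda>_. M)) (\<lambda>y. g (y j) * g (y k)) =
           measure_pmf.expectation M g * measure_pmf.expectation M g"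
proof -
  let ?P = "Pi_pmf A d (\<lambda>_. M)"
  have "prob_space.indep_vars ?P (\<lambda>_. count_space UNIV) (\<lambda>i y. y i) {j, k}"
    using assms
    by (intro prob_space.indep_vars_subset[OF measure_pmf.prob_space_axioms indep_vars_Pi_pmf])
       auto
  then have indep: "prob_space.indep_vars ?P (\<lambda>_. borel) (\<lambda>i y. g (y i)) {j, k}"
    by (rule prob_space.indep_vars_compose2[OF measure_pmf.prob_space_axioms]) simp
  have "measure_pmf.expectation ?P (\<lambda>y. \<Prod>i\<in>{j, k}. g (y i)) =
          (\<Prod>i\<in>{j, k}. measure_pmf.expectation ?P (\<lambda>y. g (y i)))"
    using assms
    by (intro prob_space.indep_vars_lebesgue_integral[OF measure_pmf.prob_space_axioms _ indep]
          integrable_Pi_pmf_component) auto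
  then show ?thesis
    using assms by (simp add: expectation_Pi_pmf_component)
qed

lemma variance_sample_mean_Pi_pmf:
  fixes g :: "'a \<Rightarrow> real"
  assumes "finite (set_pmf M)" "N > 0"
  shows "measure_pmf.variance (Pi_pmf {..<N} d (\<lambda>_. M)) (\<lambda>y. (\<Sum>j<N. g (y j)) / real N) =
           measure_pmf.variance M g / real N"
proof -
  let ?P = "Pi_pmf {..<N} d (\<lambda>_. M)"
  define \<mu> where "\<mu> = measure_pmf.expectation M g"
  define c where "c = (\<lambda>x. g x - \<mu>)"
  have int_M: "integrable (measure_pmf M) f" for f :: "'a \<Rightarrow> real"
    using assms(1) by (rule integrable_measure_pmf_finite)
  have int_P: "integrable (measure_pmf ?P) f" for f :: "(nat \<Rightarrow> 'a) \<Rightarrow> real"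
    using assms(1)
    by (intro integrable_measure_pmf_finite) (auto simp: set_Pi_pmf intro!: finite_PiE_dflt)
  have mean: "measure_pmf.expectation ?P (\<lambda>y. (\<Sum>j<N. g (y j)) / real N) = \<mu>"
    using assms(2) by (simp add: int_P expectation_Pi_pmf_component \<mu>_def)
  have centered: "(\<Sum>j<N. g (y j)) / real N - \<mu> = (\<Sum>j<N. c (y j)) / real N" for y
    using assms(2) by (simp add: c_def sum_subtractf field_simps)
  have centered_mean: "measure_pmf.expectation M c = 0"
    by (simp add: c_def \<mu>_def int_M prob_space.prob_space)
  have covariance: "measure_pmf.expectation ?P (\<lambda>y. c (y j) * c (y k)) =
      (if j = k then measure_pmf.variance M g else 0)" if "j < N" "k < N" for j k
  proof (cases "j = k")
    case True
    then show ?thesis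
      using expectation_Pi_pmf_component[where A = "{..<N}" and j = k and d = d and M = M
          and g = "\<lambda>x. c x * c x"] that
      by (simp add: c_def \<mu>_def power2_eq_square)
  next
    case False
    then show ?thesis
      using expectation_Pi_pmf_distinct_components[of "{..<N}" j k M c] that int_M centered_mean by simp
  qed
  have "measure_pmf.variance ?P (\<lambda>y. (\<Sum>j<N. g (y j)) / real N) =
      measure_pmf.expectation ?P (\<lambda>y. (\<Sum>j<N. \<Sum>k<N. c (y j) * c (y k))) / real N ^ 2"
    unfolding mean centered by (simp add: power_divide power2_eq_square sum_product int_P)
  also have "\<dots> = (\<Sum>j<N. \<Sum>k<N. if j = k then measure_pmf.variance M g else 0) / real N ^ 2"
    by (simp add: int_P covariance)
  also have "\<dots> = measure_pmf.variance M g / real N"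
    by (simp add: power2_eq_square)
  finally show ?thesis .
qed

definition patterns :: "nat \<Rightarrow> (nat \<Rightarrow> bool) set" where
  "patterns n = {z. \<forall>j. n \<le> j \<longrightarrow> \<not> z j}"

lemma finite_patterns: "finite (patterns n)"
proof -
  have "patterns n = PiE_dflt {..<n} False (\<lambda>_. UNIV)"
    by (auto simp: patterns_def PiE_dflt_def not_less)
  then show ?thesis
    by (simp add: finite_PiE_dflt)
qed

lemma set_pmf_pattern_pmf: "set_pmf (pattern_pmf n q) \<subseteq> patterns n"
  using set_Pi_pmf_subset[of "{..<n}" False] by (auto simp: pattern_pmf_def patterns_def not_less)

lemma finite_set_pmf_pattern_pmf: "finite (set_pmf (pattern_pmf n q))"
  using finite_subset[OF set_pmf_pattern_pmf finite_patterns] .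

lemma wt_le: "wt n z \<le> n"
  unfolding wt_def using card_mono[of "{..<n}" "{j. j < n \<and> z j}"] by auto

lemma card_zeros_eq: "card {j. j < n \<and> \<not> z j} = n - wt n z"
proof -
  have "{j. j < n \<and> \<not> z j} = {..<n} - {j. j < n \<and> z j}"
    by auto
  then show ?thesis
    unfolding wt_def by (simp add: card_Diff_subset subset_eq)
qed

lemma pmf_pattern_pmf:
  assumes "0 \<le> q" "q \<le> 1" "z \<in> patterns n"
  shows "pmf (pattern_pmf n q) z = q ^ wt n z * (1 - q) ^ (n - wt n z)"
proof -
  have "pmf (pattern_pmf n q) z = (\<Prod>j<n. if z j then q else 1 - q)"
    using assms by (auto simp: pattern_pmf_def pmf_Pi patterns_def not_less intro!: prod.cong)
  also have "\<dots> = q ^ card {j. j < n \<and> z j} * (1 - q) ^ card {j. j < n \<and> \<not> z j}"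
    by (simp add: prod.If_cases Int_def lessThan_def conj_commute)
  finally show ?thesis
    by (simp add: card_zeros_eq wt_def)
qed

lemma expectation_pattern_pmf:
  fixes f :: "(nat \<Rightarrow> bool) \<Rightarrow> real"
  assumes "0 \<le> q" "q \<le> 1"
  shows "measure_pmf.expectation (pattern_pmf n q) f =
           (\<Sum>z\<in>patterns n. f z * (q ^ wt n z * (1 - q) ^ (n - wt n z)))"
  using set_pmf_pattern_pmf[of n q]
  by (subst integral_measure_pmf_real[OF finite_patterns])
     (auto simp: pmf_pattern_pmf assms intro!: sum.cong)

lemma W_mult_weight:
  assumes "0 < q" "q < 1"
  shows "W n i p q * (q ^ i * (1 - q) ^ (n - i)) = p ^ i * (1 - p) ^ (n - i)"
  using assms by (simp add: W_def)

lemma expectation_pattern_pmf_reweight: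
  fixes f :: "(nat \<Rightarrow> bool) \<Rightarrow> real"
  assumes "0 \<le> p" "p \<le> 1" "0 < q" "q < 1"
  shows "measure_pmf.expectation (pattern_pmf n q) (\<lambda>z. f z * W n (wt n z) p q) =
           measure_pmf.expectation (pattern_pmf n p) f"
  using assms by (simp add: expectation_pattern_pmf mult.assoc W_mult_weight)

lemma expectation_pattern_pmf_by_weight:
  fixes f :: "nat \<Rightarrow> real"
  assumes "0 \<le> p" "p \<le> 1"
  shows "measure_pmf.expectation (pattern_pmf n p) (\<lambda>z. of_bool (I z) * f (wt n z)) =
           (\<Sum>i\<le>n. f i * P_err n I p i)"
proof -
  have "measure_pmf.expectation (pattern_pmf n p) (\<lambda>z. of_bool (I z) * f (wt n z)) =
          (\<Sum>i\<le>n. \<Sum>z\<in>{z \<in> patterns n. wt n z = i}.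
             of_bool (I z) * f (wt n z) * (p ^ wt n z * (1 - p) ^ (n - wt n z)))"
    unfolding expectation_pattern_pmf[OF assms]
    by (rule sum.group[symmetric]) (auto simp: finite_patterns wt_le)
  also have "\<dots> = (\<Sum>i\<le>n. f i * P_err n I p i)"
    by (simp add: P_err_def patterns_def sum_distrib_left mult_ac)
  finally show ?thesis .
qed

lemma has_real_derivative_W:
  assumes "i \<le> n" "0 < q" "q < 1"
  shows "((\<lambda>r. W n i p r) has_real_derivative
           - ((real i - real n * q) / (q * (1 - q))) * W n i p q) (at q)"
proof -
  have "((\<lambda>r. W n i p r) has_real_derivative
          - (p ^ i * (1 - p) ^ (n - i)) *
            (real i * q ^ (i - 1) * (1 - q) ^ (n - i) - q ^ i * (real (n - i) * (1 - q) ^ (n - i - 1)))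
            / (q ^ i * (1 - q) ^ (n - i)) ^ 2) (at q)"
    unfolding W_def using assms
    by (auto intro!: derivative_eq_intros simp: power2_eq_square)
  moreover have "- (p ^ i * (1 - p) ^ (n - i)) *
            (real i * q ^ (i - 1) * (1 - q) ^ (n - i) - q ^ i * (real (n - i) * (1 - q) ^ (n - i - 1)))
            / (q ^ i * (1 - q) ^ (n - i)) ^ 2 = - ((real i - real n * q) / (q * (1 - q))) * W n i p q"
  proof -
    have i: "real i * q ^ (i - 1) = real i * q ^ i / q"
      using assms by (cases i) auto
    have ni: "real (n - i) * (1 - q) ^ (n - i - 1) = real (n - i) * (1 - q) ^ (n - i) / (1 - q)"
      using assms by (cases "n - i") auto
    show ?thesis
      unfolding i ni W_def using assms by (simp add: of_nat_diff field_simps power2_eq_square)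
  qed
  ultimately show ?thesis by simp
qed

lemma var_IS_eq:
  assumes "N > 0" "0 \<le> p" "p \<le> 1" "0 < q" "q < 1"
  shows "var_IS n N I p q =
           ((\<Sum>i\<le>n. W n i p q * P_err n I p i) - (\<Sum>i\<le>n. P_err n I p i)\<^sup>2) / real N"
proof -
  let ?g = "\<lambda>z. of_bool (I z) * W n (wt n z) p q"
  let ?E = "measure_pmf.expectation (pattern_pmf n q)"
  have "var_IS n N I p q = measure_pmf.variance (pattern_pmf n q) ?g / real N"
    unfolding var_IS_def P_IS_def samples_pmf_def
    using variance_sample_mean_Pi_pmf[OF finite_set_pmf_pattern_pmf assms(1), where g = ?g] by simp
  also have "measure_pmf.variance (pattern_pmf n q) ?g = ?E (\<lambda>z. (?g z)\<^sup>2) - (?E ?g)\<^sup>2"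
    by (intro measure_pmf.variance_eq integrable_measure_pmf_finite finite_set_pmf_pattern_pmf)
  also have "?E (\<lambda>z. (?g z)\<^sup>2) = ?E (\<lambda>z. of_bool (I z) * W n (wt n z) p q * W n (wt n z) p q)"
    by (rule arg_cong[where f = ?E]) (auto simp: fun_eq_iff power2_eq_square)
  also have "\<dots> = measure_pmf.expectation (pattern_pmf n p) (\<lambda>z. of_bool (I z) * W n (wt n z) p q)"
    by (rule expectation_pattern_pmf_reweight[OF assms(2-5)])
  also have "\<dots> = (\<Sum>i\<le>n. W n i p q * P_err n I p i)"
    by (rule expectation_pattern_pmf_by_weight[OF assms(2-3)])
  also have "?E ?g = (\<Sum>i\<le>n. P_err n I p i)"
    using expectation_pattern_pmf_reweight[OF assms(2-5), of n "\<lambda>z. of_bool (I z)"]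
          expectation_pattern_pmf_by_weight[OF assms(2-3), of n I "\<lambda>_. 1"]
    by simp
  finally show ?thesis .
qed

lemma P_err_eq_0:
  assumes "\<And>z. wt n z \<le> t \<Longrightarrow> \<not> I z" "i \<le> t"
  shows "P_err n I p i = 0"
  using assms unfolding P_err_def by (intro sum.neutral) auto

theorem lemma2:
  fixes n N t :: nat and p q :: real and I :: "(nat \<Rightarrow> bool) \<Rightarrow> bool"
  assumes "n \<ge> 1" and "N \<ge> 1" and "0 < p" and "p < 1"
    and "t < n"
    and "\<And>z. wt n z \<le> t \<Longrightarrow> \<not> I z"
    and "0 < q" and "q < 1"
  shows "((\<lambda>r. var_IS n N I p r) has_real_derivative
           (- (1 / real N) * (\<Sum>i = t + 1..n.
               (real i - real n * q) / (q * (1 - q)) * W n i p q * P_err n I p i))) (at q)"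
proof -
  define V where "V r = ((\<Sum>i\<le>n. W n i p r * P_err n I p i) - (\<Sum>i\<le>n. P_err n I p i)\<^sup>2) / real N"
    for r
  define F where "F i = (real i - real n * q) / (q * (1 - q)) * W n i p q" for i
  have "(V has_real_derivative (\<Sum>i\<le>n. - F i * P_err n I p i) / real N) (at q)"
    unfolding V_def F_def using assms
    by (auto intro!: derivative_eq_intros has_real_derivative_W)
  also have "(\<Sum>i\<le>n. - F i * P_err n I p i) = - (\<Sum>i = t + 1..n. F i * P_err n I p i)"
    unfolding sum_negf[symmetric] mult_minus_left[symmetric]
    by (intro sum.mono_neutral_right) (auto simp: P_err_eq_0[OF assms(6)] not_less_eq_eq)
  finally have "(V has_real_derivative
          (- (1 / real N) * (\<Sum>i = t + 1..n.
               (real i - real n * q) / (q * (1 - q)) * W n i p q * P_err n I p i))) (at q)"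
    by (simp add: F_def)
  then show ?thesis
  proof (rule has_field_derivative_transform_within_open[OF _ open_greaterThanLessThan])
    show "q \<in> {0<..<1}"
      using assms by simp
    fix r :: real
    assume "r \<in> {0<..<1}"
    then show "V r = var_IS n N I p r"
      using assms by (simp add: V_def var_IS_eq)
  qed
qed

end
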